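(* (i) Let $X$ be a real normed linear space and $\varepsilon\in[0,2)$. Then $X$ is $\varepsilon$-smooth if and only if each two-dimensional subspace of $X$ is $\varepsilon$-smooth. (ii) Let $X$ be a real normed linear space. If $X$ is approximately smooth, then each two-dimensional subspace of $X$ is approximately smooth. Moreover, if $X$ is finite-dimensional and each of its two-dimensional subspaces is approximately smooth, then $X$ is approximately smooth.
   Context: For a normed space $Z$ and $z\in Z\setminus\{\theta\}$, $J(z)=\{f\in S_{Z^*}: f(z)=\|z\|\}$; $z$ is $\varepsilon$-smooth if $\operatorname{diam}J(z)=\sup_{f,g\in J(z)}\|f-g\|\le\varepsilon$. The space $Z$ is $\varepsilon$-smooth ($\varepsilon\in[0,2)$) if every $z\in S_Z$ is $\varepsilon$-smooth, and $Z$ is approximately smooth if it is $\varepsilon$-smooth for some $\varepsilon\in[0,2)$. Subspaces carry the restricted norm. *)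

theory Defs
  imports "HOL-Analysis.Analysis"
begin

text \<open>A subspace Y of a real normed space carries the restricted norm.
  Its dual Y* is modelled by real-valued functions that are linear and bounded on Y
  (only their values on Y matter).\<close>

definition is_functional_on :: "'a::real_normed_vector set \<Rightarrow> ('a \<Rightarrow> real) \<Rightarrow> bool" where
  "is_functional_on Y f \<longleftrightarrow>
     (\<forall>x\<in>Y. \<forall>y\<in>Y. \<forall>a b::real. f (a *\<^sub>R x + b *\<^sub>R y) = a * f x + b * f y) \<and>
     (\<exists>B. \<forall>y\<in>Y. \<bar>f y\<bar> \<le> B * norm y)"

definition dual_norm_on :: "'a::real_normed_vector set \<Rightarrow> ('a \<Rightarrow> real) \<Rightarrow> real" where
  "dual_norm_on Y f = (SUP y\<in>{y\<in>Y. norm y \<le> 1}. \<bar>f y\<bar>)"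

definition Jset :: "'a::real_normed_vector set \<Rightarrow> 'a \<Rightarrow> ('a \<Rightarrow> real) set" where
  "Jset Y z = {f. is_functional_on Y f \<and> dual_norm_on Y f = 1 \<and> f z = norm z}"

definition diam_J :: "'a::real_normed_vector set \<Rightarrow> 'a \<Rightarrow> real" where
  "diam_J Y z = (SUP p\<in>Jset Y z \<times> Jset Y z. dual_norm_on Y (\<lambda>x. fst p x - snd p x))"

definition eps_smooth_point :: "'a::real_normed_vector set \<Rightarrow> real \<Rightarrow> 'a \<Rightarrow> bool" where
  "eps_smooth_point Y \<epsilon> z \<longleftrightarrow> diam_J Y z \<le> \<epsilon>"

definition eps_smooth :: "'a::real_normed_vector set \<Rightarrow> real \<Rightarrow> bool" where
  "eps_smooth Y \<epsilon> \<longleftrightarrow> (\<forall>z\<in>Y. norm z = 1 \<longrightarrow> eps_smooth_point Y \<epsilon> z)"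

definition approx_smooth :: "'a::real_normed_vector set \<Rightarrow> bool" where
  "approx_smooth Y \<longleftrightarrow> (\<exists>\<epsilon>. 0 \<le> \<epsilon> \<and> \<epsilon> < 2 \<and> eps_smooth Y \<epsilon>)"

end

theory Submission
  imports Defs
begin

(* epsilon-smoothness is read off pairs of supporting functionals: diam J(z) <= epsilon says
   exactly that |f y - g y| <= epsilon for all f, g in J(z) and all y in the unit ball.  By
   Hahn-Banach the supporting functionals at z computed in a subspace Y are precisely the
   restrictions to Y of those computed in X, so epsilon-smoothness passes to subspaces; conversely
   two elements of J(z) can only differ at some y outside span {z}, and then they already differ
   on the plane span {z, y}.
   If X is not approximately smooth, there are unit vectors z and vectors y in the unit ball with
   ||z + y|| and ||z - y|| both arbitrarily close to 2.  In finite dimension the unit ball is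
   compact, so some such pair has ||z + y|| = ||z - y|| = 2; the functionals norming z + y and
   z - y then lie in J(z) on the plane span {z, y} and differ by 2 at y. *)

section \<open>Hahn-Banach for functionals dominated by the norm\<close>

definition dual_ball :: "('a::real_normed_vector \<Rightarrow> real) set" where
  "dual_ball = {F. linear F \<and> (\<forall>x. \<bar>F x\<bar> \<le> norm x)}"

(* Partial functionals dominated by the norm, encoded by their graphs: a subspace of X x R lying
   below the norm is automatically a graph (dominated_graph_unique), so Zorn's lemma can be applied
   to plain set inclusion. *)
definition dominated_graph :: "('a::real_normed_vector \<times> real) set \<Rightarrow> bool" where
  "dominated_graph G \<longleftrightarrow> subspace G \<and> (\<forall>(x, a)\<in>G. a \<le> norm x)"

lemma dominated_graph_unique:
  assumes "dominated_graph G" "(x, a) \<in> G" "(x, b) \<in> G"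
  shows "a = b"
proof -
  have "(x, a) - (x, b) \<in> G" "(x, b) - (x, a) \<in> G"
    using assms subspace_diff unfolding dominated_graph_def by blast+
  then have "a - b \<le> 0" "b - a \<le> 0"
    using assms(1) unfolding dominated_graph_def by fastforce+
  then show ?thesis by simp
qed

lemma norm_divide_add:
  fixes x y :: "'a::real_normed_vector"
  assumes "0 < s"
  shows "norm (x /\<^sub>R s + y) = norm (x + s *\<^sub>R y) / s"
proof -
  have "x /\<^sub>R s + y = (x + s *\<^sub>R y) /\<^sub>R s"
    using assms by (simp add: algebra_simps)
  then show ?thesis
    using assms by (simp add: divide_inverse_commute)
qed

lemma dominated_graph_insert:
  assumes G: "dominated_graph G"
    and c: "\<And>x a. (x, a) \<in> G \<Longrightarrow> a - norm (x - x0) \<le> c \<and> c \<le> norm (x + x0) - a"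
  shows "dominated_graph (span (insert (x0, c) G))"
  unfolding dominated_graph_def
proof (intro conjI subspace_span ballI)
  have spanG: "span G = G"
    using G span_eq_iff unfolding dominated_graph_def by blast
  fix p assume "p \<in> span (insert (x0, c) G)"
  then obtain t where "p - t *\<^sub>R (x0, c) \<in> G"
    unfolding span_insert spanG by blast
  then obtain x a where xa: "(x, a) \<in> G" and p: "p = (x + t *\<^sub>R x0, a + t * c)"
    by (cases p) auto
  have scaled: "(s *\<^sub>R x, s * a) \<in> G" for s
    using G xa subspace_scale[of G "(x, a)" s] unfolding dominated_graph_def by simp
  have "a + t * c \<le> norm (x + t *\<^sub>R x0)"
  proof (cases t "0::real" rule: linorder_cases)
    case less
    define s where "s = - t"
    have "s > 0" "x + t *\<^sub>R x0 = x + s *\<^sub>R (- x0)"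
      using less unfolding s_def by auto
    then have "a / s - norm (x + t *\<^sub>R x0) / s \<le> c"
      using c[OF scaled[of "1 / s"]] norm_divide_add[OF \<open>s > 0\<close>, of x "- x0"]
      by (simp add: divide_inverse_commute)
    then show ?thesis
      using \<open>s > 0\<close> unfolding s_def by (simp add: field_simps)
  next
    case equal
    then show ?thesis
      using G xa unfolding dominated_graph_def by auto
  next
    case greater
    then have "c \<le> norm (x + t *\<^sub>R x0) / t - a / t"
      using c[OF scaled[of "1 / t"]] norm_divide_add[OF greater, of x x0]
      by (simp add: divide_inverse_commute)
    then show ?thesis
      using greater by (simp add: field_simps)
  qed
  then show "case p of (x, a) \<Rightarrow> a \<le> norm x"
    using p by simp
qed

lemma dominated_graph_extend:
  assumes G: "dominated_graph G"
  obtains c where "dominated_graph (span (insert (x0, c) G))"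
proof -
  define lower where "lower = (\<lambda>(x, a). a - norm (x - x0)) ` G"
  have sep: "a - norm (x - x0) \<le> norm (y + x0) - b" if "(x, a) \<in> G" "(y, b) \<in> G" for x a y b
  proof -
    have "(x, a) + (y, b) \<in> G"
      using G that subspace_add unfolding dominated_graph_def by blast
    then have "a + b \<le> norm (x + y)"
      using G unfolding dominated_graph_def by auto
    also have "\<dots> \<le> norm (x - x0) + norm (y + x0)"
      using norm_triangle_ineq[of "x - x0" "y + x0"] by simp
    finally show ?thesis by simp
  qed
  have "(0, 0) \<in> G"
    using G subspace_0[of G] unfolding dominated_graph_def by (simp add: zero_prod_def)
  then have ne: "lower \<noteq> {}" and bdd: "bdd_above lower"
    using sep[OF _ \<open>(0, 0) \<in> G\<close>] unfolding lower_def
    by (blast, intro bdd_aboveI[where M = "norm x0"]) auto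
  have "a - norm (x - x0) \<le> Sup lower \<and> Sup lower \<le> norm (x + x0) - a" if "(x, a) \<in> G" for x a
  proof
    show "a - norm (x - x0) \<le> Sup lower"
      using that bdd unfolding lower_def by (intro cSup_upper) auto
    show "Sup lower \<le> norm (x + x0) - a"
      using that ne sep unfolding lower_def by (intro cSup_least) auto
  qed
  then show thesis
    using that dominated_graph_insert[OF G] by blast
qed

lemma dominated_graph_Union_chain:
  assumes "C \<noteq> {}" "\<And>G. G \<in> C \<Longrightarrow> dominated_graph G"
    and chain: "\<And>G H. G \<in> C \<Longrightarrow> H \<in> C \<Longrightarrow> G \<subseteq> H \<or> H \<subseteq> G"
  shows "dominated_graph (\<Union>C)"
  unfolding dominated_graph_def subspace_def
proof (intro conjI ballI allI)
  show "0 \<in> \<Union>C"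
    using assms(1,2) subspace_0 unfolding dominated_graph_def by blast
  fix p q assume "p \<in> \<Union>C"
  then obtain G where G: "G \<in> C" "p \<in> G" by blast
  then show "c *\<^sub>R p \<in> \<Union>C" for c
    using assms(2) subspace_scale unfolding dominated_graph_def by blast
  show "case p of (x, a) \<Rightarrow> a \<le> norm x"
    using G assms(2) unfolding dominated_graph_def by blast
  assume "q \<in> \<Union>C"
  then obtain H where "H \<in> C" "p \<in> H" "q \<in> H"
    using G chain by blast
  then show "p + q \<in> \<Union>C"
    using assms(2) subspace_add unfolding dominated_graph_def by blast
qed

lemma exists_total_dominated_graph:
  assumes "dominated_graph G"
  obtains M where "dominated_graph M" "G \<subseteq> M" "\<And>x. \<exists>a. (x, a) \<in> M"
proof -
  define A where "A = {H. dominated_graph H \<and> G \<subseteq> H}"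
  have "\<exists>M\<in>A. \<forall>H\<in>A. M \<subseteq> H \<longrightarrow> H = M"
  proof (rule subset_Zorn_nonempty)
    show "A \<noteq> {}"
      using assms unfolding A_def by blast
    fix C assume C: "C \<noteq> {}" "subset.chain A C"
    then have "dominated_graph (\<Union>C)"
      unfolding A_def subset.chain_def by (intro dominated_graph_Union_chain) blast+
    moreover have "G \<subseteq> \<Union>C"
      using C unfolding A_def subset.chain_def by blast
    ultimately show "\<Union>C \<in> A"
      unfolding A_def by blast
  qed
  then obtain M where "M \<in> A" and max: "\<forall>H\<in>A. M \<subseteq> H \<longrightarrow> H = M" ..
  then have M: "dominated_graph M" "G \<subseteq> M"
    unfolding A_def by auto
  have "\<exists>a. (x, a) \<in> M" for x
  proof -
    obtain c where "dominated_graph (span (insert (x, c) M))"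
      using dominated_graph_extend[OF M(1)] .
    moreover have "M \<subseteq> span (insert (x, c) M)"
      by (rule order_trans[OF subset_insertI span_superset])
    ultimately have "span (insert (x, c) M) = M"
      using max M(2) unfolding A_def by auto
    then have "(x, c) \<in> M"
      using span_base[OF insertI1, of "(x, c)" M] by simp
    then show ?thesis ..
  qed
  with M show thesis
    by (rule that)
qed

lemma hahn_banach_dominated_graph:
  assumes "dominated_graph G"
  obtains F where "F \<in> dual_ball" "\<And>x a. (x, a) \<in> G \<Longrightarrow> F x = a"
proof -
  obtain M where M: "dominated_graph M" "G \<subseteq> M" and total: "\<And>x. \<exists>a. (x, a) \<in> M"
    using exists_total_dominated_graph[OF assms] by blast
  define F where "F x = (THE a. (x, a) \<in> M)" for x
  have graph: "(x, a) \<in> M \<longleftrightarrow> a = F x" for x a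
    unfolding F_def using total dominated_graph_unique[OF M(1)] by (metis the_equality)
  have "linear F"
  proof
    fix x y and c :: real
    show "F (x + y) = F x + F y"
      using M(1) subspace_add[of M "(x, F x)" "(y, F y)"] graph unfolding dominated_graph_def by simp
    show "F (c *\<^sub>R x) = c *\<^sub>R F x"
      using M(1) subspace_scale[of M "(x, F x)" c] graph unfolding dominated_graph_def by simp
  qed
  have "F x \<le> norm x" for x
    using M(1) graph[of x "F x"] unfolding dominated_graph_def by auto
  then have "\<bar>F x\<bar> \<le> norm x" for x
    using linear_neg[OF \<open>linear F\<close>, of x] by (metis abs_le_iff minus_le_iff norm_minus_cancel)
  with \<open>linear F\<close> have "F \<in> dual_ball"
    unfolding dual_ball_def by simp
  moreover have "F x = a" if "(x, a) \<in> G" for x a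
    using that M(2) graph[of x a] by blast
  ultimately show thesis
    by (rule that)
qed

section \<open>Dual norms and supporting functionals\<close>

lemma dual_ball_linear: "F \<in> dual_ball \<Longrightarrow> linear F"
  unfolding dual_ball_def by simp

lemma dual_ball_abs_le: "F \<in> dual_ball \<Longrightarrow> \<bar>F x\<bar> \<le> norm x"
  unfolding dual_ball_def by simp

lemma exists_norming_functional:
  fixes x :: "'a::real_normed_vector"
  obtains F where "F \<in> dual_ball" "F x = norm x"
proof -
  have "dominated_graph (span {(x, norm x)})"
    unfolding dominated_graph_def
  proof (intro conjI subspace_span)
    show "\<forall>(y, a)\<in>span {(x, norm x)}. a \<le> norm y"
      by (auto simp: span_singleton abs_mult intro!: mult_right_mono)
  qed
  then obtain F where "F \<in> dual_ball" "\<And>y a. (y, a) \<in> span {(x, norm x)} \<Longrightarrow> F y = a"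
    by (rule hahn_banach_dominated_graph) blast
  then show thesis
    using that span_base[of "(x, norm x)"] by blast
qed

lemma dual_ball_is_functional_on:
  assumes "F \<in> dual_ball"
  shows "is_functional_on Y F"
proof -
  have "linear F" "\<And>y. \<bar>F y\<bar> \<le> 1 * norm y"
    using assms unfolding dual_ball_def by auto
  moreover have "F (a *\<^sub>R x + b *\<^sub>R y) = a * F x + b * F y" for a b x y
    using \<open>linear F\<close> by (simp add: linear_add linear_scale)
  ultimately show ?thesis
    unfolding is_functional_on_def by blast
qed

lemma is_functional_on_scale:
  assumes "is_functional_on Y f" "y \<in> Y"
  shows "f (c *\<^sub>R y) = c * f y"
proof -
  have "f (c *\<^sub>R y + 0 *\<^sub>R y) = c * f y + 0 * f y"
    using assms unfolding is_functional_on_def by blast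
  then show ?thesis
    by simp
qed

lemma dual_norm_on_le:
  assumes "subspace Y" "\<And>y. y \<in> Y \<Longrightarrow> norm y \<le> 1 \<Longrightarrow> \<bar>f y\<bar> \<le> c"
  shows "dual_norm_on Y f \<le> c"
  unfolding dual_norm_on_def using assms subspace_0[OF assms(1)]
  by (intro cSUP_least) auto

lemma abs_le_dual_norm_on:
  assumes "\<And>y. y \<in> Y \<Longrightarrow> norm y \<le> 1 \<Longrightarrow> \<bar>f y\<bar> \<le> B" "y \<in> Y" "norm y \<le> 1"
  shows "\<bar>f y\<bar> \<le> dual_norm_on Y f"
  unfolding dual_norm_on_def using assms
  by (intro cSUP_upper) (auto intro!: bdd_aboveI2[where M = B])

lemma abs_le_dual_norm_on_mult_norm:
  assumes "subspace Y" "is_functional_on Y f" "y \<in> Y"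
  shows "\<bar>f y\<bar> \<le> dual_norm_on Y f * norm y"
proof (cases "y = 0")
  case True
  then show ?thesis
    using is_functional_on_scale[OF assms(2,3), of 0] by simp
next
  case False
  obtain B where B: "\<And>y. y \<in> Y \<Longrightarrow> \<bar>f y\<bar> \<le> B * norm y"
    using assms(2) unfolding is_functional_on_def by blast
  have unit_bound: "\<bar>f v\<bar> \<le> \<bar>B\<bar>" if "v \<in> Y" "norm v \<le> 1" for v
  proof -
    have "\<bar>f v\<bar> \<le> \<bar>B\<bar> * norm v"
      using B[OF that(1)] by (meson abs_ge_self mult_right_mono norm_ge_zero order_trans)
    also have "\<dots> \<le> \<bar>B\<bar>"
      using that(2) by (simp add: mult_left_le)
    finally show ?thesis .
  qed
  define u where "u = y /\<^sub>R norm y"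
  have u: "u \<in> Y" "norm u \<le> 1"
    using assms(1,3) False unfolding u_def by (auto simp: subspace_scale)
  have "f y = norm y * f u"
    using is_functional_on_scale[OF assms(2) u(1), of "norm y"] False unfolding u_def by simp
  then show ?thesis
    using abs_le_dual_norm_on[of Y f "\<bar>B\<bar>", OF unit_bound u]
    by (simp add: abs_mult mult.commute mult_left_mono)
qed

lemma Jset_abs_le:
  assumes "subspace Y" "f \<in> Jset Y z" "y \<in> Y"
  shows "\<bar>f y\<bar> \<le> norm y"
  using abs_le_dual_norm_on_mult_norm[OF assms(1) _ assms(3), of f] assms(2)
  unfolding Jset_def by simp

lemma dual_ball_in_Jset:
  assumes Y: "subspace Y" and z: "z \<in> Y" "norm z = 1" and F: "F \<in> dual_ball" "F z = 1"
  shows "F \<in> Jset Y z"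
proof -
  have bound: "\<bar>F y\<bar> \<le> 1" if "norm y \<le> 1" for y
    using dual_ball_abs_le[OF F(1), of y] that by linarith
  have "dual_norm_on Y F \<le> 1"
    using bound by (intro dual_norm_on_le[OF Y])
  moreover have "1 \<le> dual_norm_on Y F"
    using abs_le_dual_norm_on[of Y F 1, OF bound z(1)] z(2) F(2) by simp
  ultimately show ?thesis
    using dual_ball_is_functional_on[OF F(1)] z(2) F(2) unfolding Jset_def by simp
qed

lemma Jset_UNIV_dual_ball:
  assumes "F \<in> Jset UNIV z"
  shows "F \<in> dual_ball"
proof -
  have F: "is_functional_on UNIV F"
    using assms unfolding Jset_def by simp
  have "F (1 *\<^sub>R x + 1 *\<^sub>R y) = 1 * F x + 1 * F y" for x y
    using F unfolding is_functional_on_def by blast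
  then have "linear F"
    using is_functional_on_scale[OF F] by (intro linearI) simp_all
  then show ?thesis
    using Jset_abs_le[OF subspace_UNIV assms] unfolding dual_ball_def by simp
qed

lemma Jset_nonempty:
  assumes "subspace Y" "z \<in> Y" "norm z = 1"
  shows "Jset Y z \<noteq> {}"
proof -
  obtain F where "F \<in> dual_ball" "F z = norm z"
    by (rule exists_norming_functional)
  then show ?thesis
    using dual_ball_in_Jset[OF assms] assms(3) by auto
qed

lemma functional_graph_dominated:
  assumes Y: "subspace Y" and lin: "is_functional_on Y f" and le: "\<And>y. y \<in> Y \<Longrightarrow> f y \<le> norm y"
  shows "dominated_graph ((\<lambda>y. (y, f y)) ` Y)"
  unfolding dominated_graph_def subspace_def
proof (intro conjI ballI allI)
  show "0 \<in> (\<lambda>y. (y, f y)) ` Y"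
    using is_functional_on_scale[OF lin subspace_0[OF Y], of 0] subspace_0[OF Y]
    by (auto simp: zero_prod_def image_iff)
next
  fix p q assume "p \<in> (\<lambda>y. (y, f y)) ` Y" "q \<in> (\<lambda>y. (y, f y)) ` Y"
  then obtain x y where xy: "x \<in> Y" "y \<in> Y" "p = (x, f x)" "q = (y, f y)"
    by blast
  have "f (1 *\<^sub>R x + 1 *\<^sub>R y) = 1 * f x + 1 * f y"
    using lin xy(1,2) unfolding is_functional_on_def by blast
  then show "p + q \<in> (\<lambda>y. (y, f y)) ` Y"
    using xy subspace_add[OF Y xy(1,2)] by (auto simp: image_iff)
next
  fix c :: real and p assume "p \<in> (\<lambda>y. (y, f y)) ` Y"
  then obtain x where "x \<in> Y" "p = (x, f x)"
    by blast
  then show "c *\<^sub>R p \<in> (\<lambda>y. (y, f y)) ` Y"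
    using is_functional_on_scale[OF lin] subspace_scale[OF Y] by (auto simp: image_iff)
next
  fix p assume "p \<in> (\<lambda>y. (y, f y)) ` Y"
  then obtain x where "x \<in> Y" "p = (x, f x)"
    by blast
  then show "case p of (x, a) \<Rightarrow> a \<le> norm x"
    using le by simp
qed

lemma Jset_extend:
  assumes Y: "subspace Y" and z: "z \<in> Y" "norm z = 1" and f: "f \<in> Jset Y z"
  obtains F where "F \<in> Jset UNIV z" "\<And>y. y \<in> Y \<Longrightarrow> F y = f y"
proof -
  have "dominated_graph ((\<lambda>y. (y, f y)) ` Y)"
    using f abs_le_D1[OF Jset_abs_le[OF Y f]] unfolding Jset_def
    by (intro functional_graph_dominated[OF Y]) auto
  then obtain F where F: "F \<in> dual_ball" "\<And>y. y \<in> Y \<Longrightarrow> F y = f y"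
    by (rule hahn_banach_dominated_graph) blast
  moreover have "F z = 1"
    using F(2)[OF z(1)] f z(2) unfolding Jset_def by simp
  ultimately show thesis
    using that dual_ball_in_Jset[OF subspace_UNIV UNIV_I z(2)] by blast
qed

lemma diam_J_le_iff:
  assumes Y: "subspace Y" and z: "z \<in> Y" "norm z = 1"
  shows "diam_J Y z \<le> e \<longleftrightarrow>
    (\<forall>f\<in>Jset Y z. \<forall>g\<in>Jset Y z. \<forall>y\<in>Y. norm y \<le> 1 \<longrightarrow> \<bar>f y - g y\<bar> \<le> e)"
    (is "_ \<longleftrightarrow> ?pointwise")
proof
  have diff_le_2: "\<bar>f y - g y\<bar> \<le> 2"
    if "f \<in> Jset Y z" "g \<in> Jset Y z" "y \<in> Y" "norm y \<le> 1" for f g y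
    using Jset_abs_le[OF Y that(1,3)] Jset_abs_le[OF Y that(2,3)] that(4) by linarith
  assume diam: "diam_J Y z \<le> e"
  show ?pointwise
  proof (intro ballI impI)
    fix f g y assume fg: "f \<in> Jset Y z" "g \<in> Jset Y z" and y: "y \<in> Y" "norm y \<le> 1"
    have "\<bar>f y - g y\<bar> \<le> dual_norm_on Y (\<lambda>x. f x - g x)"
      using diff_le_2[OF fg] y by (intro abs_le_dual_norm_on[where B = 2])
    also have "\<dots> \<le> diam_J Y z"
      unfolding diam_J_def
    proof (rule cSUP_upper2[where x = "(f, g)"])
      show "bdd_above ((\<lambda>p. dual_norm_on Y (\<lambda>x. fst p x - snd p x)) ` (Jset Y z \<times> Jset Y z))"
        using diff_le_2 by (intro bdd_aboveI2[where M = 2] dual_norm_on_le[OF Y]) auto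
    qed (use fg in auto)
    finally show "\<bar>f y - g y\<bar> \<le> e"
      using diam by linarith
  qed
next
  assume ?pointwise
  then show "diam_J Y z \<le> e"
    unfolding diam_J_def using Jset_nonempty[OF Y z]
    by (intro cSUP_least dual_norm_on_le[OF Y]) auto
qed

lemma eps_smooth_iff:
  assumes "subspace Y"
  shows "eps_smooth Y e \<longleftrightarrow> (\<forall>z\<in>Y. norm z = 1 \<longrightarrow>
    (\<forall>f\<in>Jset Y z. \<forall>g\<in>Jset Y z. \<forall>y\<in>Y. norm y \<le> 1 \<longrightarrow> \<bar>f y - g y\<bar> \<le> e))"
  unfolding eps_smooth_def eps_smooth_point_def using diam_J_le_iff[OF assms] by simp

section \<open>Reduction to two-dimensional subspaces\<close>

lemma eps_smooth_subspace:
  fixes Y :: "'a::real_normed_vector set"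
  assumes X: "eps_smooth (UNIV :: 'a set) e" and Y: "subspace Y"
  shows "eps_smooth Y e"
  unfolding eps_smooth_iff[OF Y]
proof (intro ballI impI)
  fix z f g y assume z: "z \<in> Y" "norm z = 1" and fg: "f \<in> Jset Y z" "g \<in> Jset Y z"
    and y: "y \<in> Y" "norm y \<le> 1"
  obtain F where F: "F \<in> Jset UNIV z" "F y = f y"
    using Jset_extend[OF Y z fg(1)] y(1) by metis
  obtain G where G: "G \<in> Jset UNIV z" "G y = g y"
    using Jset_extend[OF Y z fg(2)] y(1) by metis
  have "\<bar>F y - G y\<bar> \<le> e"
    using X F(1) G(1) z(2) y(2) unfolding eps_smooth_iff[OF subspace_UNIV] by blast
  then show "\<bar>f y - g y\<bar> \<le> e"
    using F(2) G(2) by simp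
qed

lemma dim_span_pair:
  assumes "z \<noteq> 0" "y \<notin> span {z}"
  shows "dim (span {z, y}) = 2"
proof -
  have "independent {y, z}"
    using assms by (simp add: independent_insert)
  moreover have "y \<noteq> z"
    using assms(2) span_base[of z "{z}"] by auto
  ultimately show ?thesis
    using dim_span_eq_card_independent[of "{y, z}"] by (simp add: insert_commute)
qed

lemma eps_smooth_if_planes:
  assumes "0 \<le> e" and planes: "\<And>Y :: 'a set. subspace Y \<Longrightarrow> dim Y = 2 \<Longrightarrow> eps_smooth Y e"
  shows "eps_smooth (UNIV :: 'a::real_normed_vector set) e"
  unfolding eps_smooth_iff[OF subspace_UNIV]
proof (intro ballI impI)
  fix z y :: 'a and F G assume z: "norm z = 1" and FG: "F \<in> Jset UNIV z" "G \<in> Jset UNIV z"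
    and y: "norm y \<le> 1"
  have "F z = 1" "G z = 1"
    using FG z unfolding Jset_def by auto
  show "\<bar>F y - G y\<bar> \<le> e"
  proof (cases "y \<in> span {z}")
    case True
    then obtain t where "y = t *\<^sub>R z"
      by (auto simp: span_singleton)
    then show ?thesis
      using \<open>F z = 1\<close> \<open>G z = 1\<close> \<open>0 \<le> e\<close>
        linear_scale[OF dual_ball_linear[OF Jset_UNIV_dual_ball[OF FG(1)]]]
        linear_scale[OF dual_ball_linear[OF Jset_UNIV_dual_ball[OF FG(2)]]]
      by simp
  next
    case False
    define Y where "Y = span {z, y}"
    have Y: "subspace Y" "z \<in> Y" "y \<in> Y"
      unfolding Y_def by (auto intro: span_base)
    have "dim Y = 2"
      unfolding Y_def using False z by (intro dim_span_pair) auto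
    then have "eps_smooth Y e"
      using planes Y(1) by blast
    moreover have "F \<in> Jset Y z" "G \<in> Jset Y z"
      using dual_ball_in_Jset[OF Y(1,2) z] Jset_UNIV_dual_ball FG \<open>F z = 1\<close> \<open>G z = 1\<close> by auto
    ultimately show ?thesis
      using Y z y unfolding eps_smooth_iff[OF Y(1)] by blast
  qed
qed

section \<open>Wide pairs and the finite-dimensional case\<close>

lemma exists_wide_pair_if_not_eps_smooth:
  assumes "\<not> eps_smooth (UNIV :: 'a set) e"
  obtains z y :: "'a::real_normed_vector"
  where "norm z = 1" "norm y \<le> 1" "e < norm (z + y)" "e < norm (z - y)"
proof -
  obtain z y :: 'a and F G where z: "norm z = 1" and FG: "F \<in> Jset UNIV z" "G \<in> Jset UNIV z"
    and y: "norm y \<le> 1" and gap: "e < F y - G y"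
  proof -
    obtain z y :: 'a and F G where "norm z = 1" "F \<in> Jset UNIV z" "G \<in> Jset UNIV z"
      "norm y \<le> 1" "\<not> \<bar>F y - G y\<bar> \<le> e"
      using assms unfolding eps_smooth_iff[OF subspace_UNIV] by blast
    then show thesis
      using that[of z F G y] that[of z G F y] by (auto simp: abs_if split: if_splits)
  qed
  have F: "F \<in> dual_ball" "F z = 1" and G: "G \<in> dual_ball" "G z = 1"
    using Jset_UNIV_dual_ball[OF FG(1)] Jset_UNIV_dual_ball[OF FG(2)] FG z
    unfolding Jset_def by auto
  have "\<bar>F y\<bar> \<le> 1" "\<bar>G y\<bar> \<le> 1"
    using dual_ball_abs_le[OF F(1), of y] dual_ball_abs_le[OF G(1), of y] y by linarith+
  then have "e < F (z + y)" "e < G (z - y)"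
    using gap F(2) G(2) linear_add[OF dual_ball_linear[OF F(1)]]
      linear_diff[OF dual_ball_linear[OF G(1)]] by auto
  moreover have "F (z + y) \<le> norm (z + y)" "G (z - y) \<le> norm (z - y)"
    using dual_ball_abs_le[OF F(1)] dual_ball_abs_le[OF G(1)] abs_le_D1 by blast+
  ultimately show thesis
    using that[OF z y] by linarith
qed

lemma wide_pair_not_in_span:
  fixes z y :: "'a::real_normed_vector"
  assumes "norm z = 1" "norm y \<le> 1" "2 \<le> norm (z + y)" "2 \<le> norm (z - y)"
  shows "y \<notin> span {z}"
proof
  assume "y \<in> span {z}"
  then obtain t where y: "y = t *\<^sub>R z"
    by (auto simp: span_singleton)
  then have "z + y = (1 + t) *\<^sub>R z" "z - y = (1 - t) *\<^sub>R z"
    by (simp_all add: algebra_simps)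
  then have "norm y = \<bar>t\<bar>" "norm (z + y) = \<bar>1 + t\<bar>" "norm (z - y) = \<bar>1 - t\<bar>"
    using assms(1) y by simp_all
  then show False
    using assms by linarith
qed

lemma wide_pair_span_not_eps_smooth:
  fixes z y :: "'a::real_normed_vector"
  assumes z: "norm z = 1" and y: "norm y \<le> 1"
    and wide: "2 \<le> norm (z + y)" "2 \<le> norm (z - y)" and "e < 2"
  shows "\<not> eps_smooth (span {z, y}) e"
proof
  assume smooth: "eps_smooth (span {z, y}) e"
  have zy: "z \<in> span {z, y}" "y \<in> span {z, y}"
    by (auto intro: span_base)
  obtain F where F: "F \<in> dual_ball" "F (z + y) = norm (z + y)"
    by (rule exists_norming_functional)
  obtain G where G: "G \<in> dual_ball" "G (z - y) = norm (z - y)"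
    by (rule exists_norming_functional)
  have "F z \<le> 1" "F y \<le> 1" "G z \<le> 1" "- G y \<le> 1"
    using dual_ball_abs_le[OF F(1), of z] dual_ball_abs_le[OF F(1), of y]
      dual_ball_abs_le[OF G(1), of z] dual_ball_abs_le[OF G(1), of y] z y by auto
  then have "F z = 1" "F y = 1" "G z = 1" "G y = - 1"
    using F G wide linear_add[OF dual_ball_linear[OF F(1)], of z y]
      linear_diff[OF dual_ball_linear[OF G(1)], of z y] by auto
  then have "F \<in> Jset (span {z, y}) z" "G \<in> Jset (span {z, y}) z"
    using dual_ball_in_Jset[OF subspace_span zy(1) z] F(1) G(1) by auto
  then have "\<bar>F y - G y\<bar> \<le> e"
    using smooth zy z y unfolding eps_smooth_iff[OF subspace_span] by blast
  then show False
    using \<open>F y = 1\<close> \<open>G y = - 1\<close> \<open>e < 2\<close> by simp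
qed

lemma bounded_coefficients_convergent_subseq:
  fixes c :: "nat \<Rightarrow> 'b \<Rightarrow> real"
  assumes "finite B" "\<And>n b. b \<in> B \<Longrightarrow> \<bar>c n b\<bar> \<le> M"
  obtains l r where "strict_mono r" "\<And>b. b \<in> B \<Longrightarrow> (\<lambda>n. c (r n) b) \<longlonglongrightarrow> l b"
proof -
  have "\<forall>\<delta>\<subseteq>B. \<exists>l r. strict_mono r \<and>
    (\<forall>\<epsilon>>0. \<forall>\<^sub>F n in sequentially. \<forall>b\<in>\<delta>. dist (c (r n) b) (l b) < \<epsilon>)"
    using assms by (intro compact_lemma_general[where proj = "\<lambda>x b. x b" and unproj = "\<lambda>x. x"])
      (auto simp: bounded_iff)
  then obtain l r where r: "strict_mono r"
    and lim: "\<And>\<epsilon>. \<epsilon> > 0 \<Longrightarrow> \<forall>\<^sub>F n in sequentially. \<forall>b\<in>B. dist (c (r n) b) (l b) < \<epsilon>"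
    by blast
  have "(\<lambda>n. c (r n) b) \<longlonglongrightarrow> l b" if "b \<in> B" for b
    unfolding tendsto_iff using that by (blast intro: eventually_mono[OF lim])
  then show thesis
    by (rule that[OF r])
qed

lemma independent_unit_coefficients_norm_lower_bound:
  fixes B :: "'a::real_normed_vector set"
  assumes B: "finite B" "independent B"
  shows "\<exists>m>0. \<forall>c. (\<Sum>b\<in>B. \<bar>c b\<bar>) = 1 \<longrightarrow> m \<le> norm (\<Sum>b\<in>B. c b *\<^sub>R b)"
proof (rule ccontr)
  assume "\<not> ?thesis"
  then have "\<forall>n. \<exists>c. (\<Sum>b\<in>B. \<bar>c b\<bar>) = 1 \<and> norm (\<Sum>b\<in>B. c b *\<^sub>R b) < 1 / Suc n"
    by (metis not_le of_nat_0_less_iff zero_less_Suc zero_less_divide_1_iff)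
  then obtain c where c1: "\<And>n. (\<Sum>b\<in>B. \<bar>c n b\<bar>) = 1"
    and small: "\<And>n. norm (\<Sum>b\<in>B. c n b *\<^sub>R b) < 1 / Suc n"
    by metis
  have bound: "\<bar>c n b\<bar> \<le> 1" if "b \<in> B" for n b
    using member_le_sum[of b B "\<lambda>b. \<bar>c n b\<bar>"] that B(1) c1[of n] by simp
  obtain l r where r: "strict_mono r" and l: "\<And>b. b \<in> B \<Longrightarrow> (\<lambda>n. c (r n) b) \<longlonglongrightarrow> l b"
    using bounded_coefficients_convergent_subseq[where c = c, OF B(1) bound] by metis
  have "(\<lambda>n. \<Sum>b\<in>B. \<bar>c (r n) b\<bar>) \<longlonglongrightarrow> (\<Sum>b\<in>B. \<bar>l b\<bar>)"
    using l by (intro tendsto_intros) auto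
  then have "(\<Sum>b\<in>B. \<bar>l b\<bar>) = 1"
    unfolding c1 by (simp add: LIMSEQ_const_iff)
  then have "\<exists>b\<in>B. l b \<noteq> 0"
    by (metis (no_types) abs_zero sum.neutral zero_neq_one)
  have "(\<lambda>n. \<Sum>b\<in>B. c n b *\<^sub>R b) \<longlonglongrightarrow> 0"
  proof (rule Lim_null_comparison)
    show "\<forall>\<^sub>F n in sequentially. norm (\<Sum>b\<in>B. c n b *\<^sub>R b) \<le> 1 / Suc n"
      using small by (intro always_eventually allI less_imp_le)
    show "(\<lambda>n. 1 / real (Suc n)) \<longlonglongrightarrow> 0"
      by (rule LIMSEQ_Suc[OF lim_1_over_n])
  qed
  then have "(\<lambda>n. \<Sum>b\<in>B. c (r n) b *\<^sub>R b) \<longlonglongrightarrow> 0"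
    using LIMSEQ_subseq_LIMSEQ[OF _ r] unfolding comp_def by blast
  moreover have "(\<lambda>n. \<Sum>b\<in>B. c (r n) b *\<^sub>R b) \<longlonglongrightarrow> (\<Sum>b\<in>B. l b *\<^sub>R b)"
    using l by (intro tendsto_intros) auto
  ultimately have "(\<Sum>b\<in>B. l b *\<^sub>R b) = 0"
    using LIMSEQ_unique by blast
  then have "dependent B"
    using \<open>\<exists>b\<in>B. l b \<noteq> 0\<close> dependent_finite[OF B(1)] by blast
  then show False
    using B(2) by simp
qed

lemma independent_norm_lower_bound:
  fixes B :: "'a::real_normed_vector set"
  assumes B: "finite B" "independent B"
  obtains m where "0 < m" "\<And>c. m * (\<Sum>b\<in>B. \<bar>c b\<bar>) \<le> norm (\<Sum>b\<in>B. c b *\<^sub>R b)"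
proof -
  obtain m where m: "0 < m" "\<And>c. (\<Sum>b\<in>B. \<bar>c b\<bar>) = 1 \<Longrightarrow> m \<le> norm (\<Sum>b\<in>B. c b *\<^sub>R b)"
    using independent_unit_coefficients_norm_lower_bound[OF B] by blast
  have "m * (\<Sum>b\<in>B. \<bar>c b\<bar>) \<le> norm (\<Sum>b\<in>B. c b *\<^sub>R b)" for c
  proof (cases "(\<Sum>b\<in>B. \<bar>c b\<bar>) = 0")
    case False
    define s where "s = (\<Sum>b\<in>B. \<bar>c b\<bar>)"
    have "s > 0"
      using False unfolding s_def by (simp add: order_le_neq_trans sum_nonneg)
    have "(\<Sum>b\<in>B. \<bar>c b / s\<bar>) = 1"
      using \<open>s > 0\<close> unfolding s_def by (simp add: abs_div flip: sum_divide_distrib)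
    then have "m \<le> norm (\<Sum>b\<in>B. (c b / s) *\<^sub>R b)"
      by (rule m(2))
    also have "\<dots> = norm ((1 / s) *\<^sub>R (\<Sum>b\<in>B. c b *\<^sub>R b))"
      by (simp add: scaleR_sum_right)
    also have "\<dots> = norm (\<Sum>b\<in>B. c b *\<^sub>R b) / s"
      using \<open>s > 0\<close> by simp
    finally show ?thesis
      using \<open>s > 0\<close> unfolding s_def by (simp add: field_simps)
  qed simp
  then show thesis
    using that m(1) by blast
qed

lemma compact_cball_finite_span:
  fixes B :: "'a::real_normed_vector set"
  assumes "finite B" "span B = UNIV"
  shows "compact (cball (0::'a) 1)"
proof -
  obtain B' where B': "B' \<subseteq> B" "independent B'" "B \<subseteq> span B'"
    by (rule maximal_independent_subset)
  have fin: "finite B'"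
    using B'(1) assms(1) finite_subset by blast
  have "span B' = UNIV"
    using span_minimal[OF B'(3) subspace_span] assms(2) by (simp add: top.extremum_unique)
  then have "v \<in> range (\<lambda>u. \<Sum>b\<in>B'. u b *\<^sub>R b)" for v :: 'a
    using span_finite[OF fin] by simp
  then have coords: "\<exists>u. v = (\<Sum>b\<in>B'. u b *\<^sub>R b)" for v :: 'a
    by (meson rangeE)
  obtain m where m: "0 < m" "\<And>c. m * (\<Sum>b\<in>B'. \<bar>c b\<bar>) \<le> norm (\<Sum>b\<in>B'. c b *\<^sub>R b)"
    using independent_norm_lower_bound[OF fin B'(2)] by blast
  have "seq_compact (cball (0::'a) 1)"
  proof (rule seq_compactI)
    fix x :: "nat \<Rightarrow> 'a" assume x: "\<forall>n. x n \<in> cball 0 1"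
    obtain c where c: "\<And>n. x n = (\<Sum>b\<in>B'. c n b *\<^sub>R b)"
      using choice[of "\<lambda>n u. x n = (\<Sum>b\<in>B'. u b *\<^sub>R b)"] coords by blast
    have "\<bar>c n b\<bar> \<le> 1 / m" if "b \<in> B'" for n b
    proof -
      have "m * \<bar>c n b\<bar> \<le> m * (\<Sum>b\<in>B'. \<bar>c n b\<bar>)"
        using member_le_sum[of b B' "\<lambda>b. \<bar>c n b\<bar>"] that fin m(1) by simp
      also have "\<dots> \<le> 1"
        using m(2)[of "c n"] x c[of n] by (metis mem_cball_0 order_trans)
      finally show ?thesis
        using m(1) by (simp add: field_simps)
    qed
    then obtain l r where r: "strict_mono r"
      and l: "\<And>b. b \<in> B' \<Longrightarrow> (\<lambda>n. c (r n) b) \<longlonglongrightarrow> l b"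
      using bounded_coefficients_convergent_subseq[where c = c, OF fin] by metis
    have "(x \<circ> r) \<longlonglongrightarrow> (\<Sum>b\<in>B'. l b *\<^sub>R b)"
      unfolding comp_def c using l by (intro tendsto_intros) auto
    moreover have "(\<Sum>b\<in>B'. l b *\<^sub>R b) \<in> cball 0 1"
      using x by (intro closed_sequentially[OF closed_cball _ calculation]) simp
    ultimately show "\<exists>l\<in>cball 0 1. \<exists>r. strict_mono r \<and> (x \<circ> r) \<longlonglongrightarrow> l"
      using r by blast
  qed
  then show ?thesis
    by (simp add: compact_eq_seq_compact_metric)
qed

lemma compact_sphere_finite_span:
  fixes B :: "'a::real_normed_vector set"
  assumes "finite B" "span B = UNIV"
  shows "compact (sphere (0::'a) 1)"
proof -
  have "closed (sphere (0::'a) 1)"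
    unfolding sphere_def by (intro closed_Collect_eq continuous_intros)
  then show ?thesis
    using compact_Int_closed[OF compact_cball_finite_span[OF assms]]
    by (metis Int_absorb1 sphere_cball)
qed

lemma exists_wide_pair_finite_dim:
  assumes "finite B" "span B = (UNIV :: 'a set)"
    and not_smooth: "\<not> approx_smooth (UNIV :: 'a set)"
  obtains z y :: "'a::real_normed_vector"
  where "norm z = 1" "norm y \<le> 1" "2 \<le> norm (z + y)" "2 \<le> norm (z - y)"
proof -
  define K where "K = sphere (0::'a) 1 \<times> cball (0::'a) 1"
  define width where "width p = min (norm (fst p + snd p)) (norm (fst p - snd p))"
    for p :: "'a \<times> 'a"
  have "compact K"
    unfolding K_def
    using compact_sphere_finite_span[OF assms(1,2)] compact_cball_finite_span[OF assms(1,2)]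
    by (rule compact_Times)
  have wide: "\<exists>p\<in>K. e < width p" if "0 \<le> e" "e < 2" for e
  proof -
    have "\<not> eps_smooth (UNIV :: 'a set) e"
      using not_smooth that unfolding approx_smooth_def by blast
    then obtain z y :: 'a where "norm z = 1" "norm y \<le> 1" "e < norm (z + y)" "e < norm (z - y)"
      by (rule exists_wide_pair_if_not_eps_smooth)
    then show ?thesis
      unfolding K_def width_def by (intro bexI[of _ "(z, y)"]) auto
  qed
  have "K \<noteq> {}"
    using wide[of 0] by force
  moreover have "continuous_on K width"
    unfolding width_def by (intro continuous_intros)
  ultimately obtain p where p: "p \<in> K" and max: "\<forall>q\<in>K. width q \<le> width p"
    using continuous_attains_sup[OF \<open>compact K\<close>] by blast
  have "2 \<le> width p"
  proof (rule dense_le_bounded[of 0])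
    fix w :: real assume "0 < w" "w < 2"
    then obtain q where "q \<in> K" "w < width q"
      using wide[of w] by auto
    then show "w \<le> width p"
      using max by force
  qed simp
  obtain z y where p_eq: "p = (z, y)"
    by (cases p)
  have "norm z = 1" "norm y \<le> 1"
    using p unfolding K_def p_eq by auto
  moreover have "2 \<le> norm (z + y)" "2 \<le> norm (z - y)"
    using \<open>2 \<le> width p\<close> unfolding width_def p_eq by auto
  ultimately show thesis
    by (rule that)
qed

lemma approx_smooth_if_planes_finite_dim:
  fixes B :: "'a::real_normed_vector set"
  assumes "finite B" "span B = UNIV"
    and planes: "\<And>Y :: 'a set. subspace Y \<Longrightarrow> dim Y = 2 \<Longrightarrow> approx_smooth Y"
  shows "approx_smooth (UNIV :: 'a set)"
proof (rule ccontr)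
  assume "\<not> approx_smooth (UNIV :: 'a set)"
  then obtain z y :: 'a where z: "norm z = 1" and y: "norm y \<le> 1"
    and wide: "2 \<le> norm (z + y)" "2 \<le> norm (z - y)"
    by (rule exists_wide_pair_finite_dim[OF assms(1,2)])
  have "z \<noteq> 0"
    using z by auto
  then have "dim (span {z, y}) = 2"
    by (rule dim_span_pair[OF _ wide_pair_not_in_span[OF z y wide]])
  then obtain e where "e < 2" "eps_smooth (span {z, y}) e"
    using planes[OF subspace_span] unfolding approx_smooth_def by blast
  then show False
    using wide_pair_span_not_eps_smooth[OF z y wide] by blast
qed

theorem theorem2p7:
  fixes X :: "'a::real_normed_vector itself"
  shows "(\<forall>\<epsilon>::real. 0 \<le> \<epsilon> \<and> \<epsilon> < 2 \<longrightarrow>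
            (eps_smooth (UNIV::'a set) \<epsilon> \<longleftrightarrow>
             (\<forall>Y::'a set. subspace Y \<and> dim Y = 2 \<longrightarrow> eps_smooth Y \<epsilon>)))
       \<and> (approx_smooth (UNIV::'a set) \<longrightarrow>
            (\<forall>Y::'a set. subspace Y \<and> dim Y = 2 \<longrightarrow> approx_smooth Y))
       \<and> ((\<exists>B::'a set. finite B \<and> span B = UNIV) \<and>
          (\<forall>Y::'a set. subspace Y \<and> dim Y = 2 \<longrightarrow> approx_smooth Y) \<longrightarrow>
            approx_smooth (UNIV::'a set))"
proof (intro conjI allI impI)
  fix e :: real assume "0 \<le> e \<and> e < 2"
  then show "eps_smooth (UNIV::'a set) e \<longleftrightarrow>
      (\<forall>Y::'a set. subspace Y \<and> dim Y = 2 \<longrightarrow> eps_smooth Y e)"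
    using eps_smooth_subspace eps_smooth_if_planes[of e] by blast
next
  fix Y :: "'a set" assume "approx_smooth (UNIV::'a set)" "subspace Y \<and> dim Y = 2"
  then show "approx_smooth Y"
    using eps_smooth_subspace unfolding approx_smooth_def by blast
next
  assume "(\<exists>B::'a set. finite B \<and> span B = UNIV) \<and>
    (\<forall>Y::'a set. subspace Y \<and> dim Y = 2 \<longrightarrow> approx_smooth Y)"
  then show "approx_smooth (UNIV::'a set)"
    using approx_smooth_if_planes_finite_dim by blast
qed

end
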